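(* Let $n\ge1$ and $\mathbb{P}\in\mathcal{P}_n$. Let \[ \mathcal{T}=\big\{T\in\mathbb{R}_{++}^{2\times n}:\ \mathbf{P}_{\mathbf{z}\sim\mathbb{P}}[z_j=T_{1j}/T_{2j}]=0\ \text{for all } j\in[n]\big\}. \] Then $R_n(\mathbb{P})=\sup_{T\in\mathcal{T}}R_n(\mathbb{P},T)$.
   Context: Scheduling on two machines with $n$ tasks. A processing-time matrix is $T=(T_{ij})\in\mathbb{R}_{++}^{2\times n}$. An allocation is $X\in\{0,1\}^{2\times n}$ with $X_{1j}+X_{2j}=1$; makespan $M(X,T)=\max_{i\in\{1,2\}}\sum_j X_{ij}T_{ij}$; $M^*(T)=\min_X M(X,T)$. $\mathcal{P}_n$ is the set of Borel probability measures on $\mathbb{R}^n$ supported in $\mathbb{R}_{++}^n$. For $\mathbb{P}\in\mathcal{P}_n$, algorithm $\mathcal{A}^{\mathbb{P}}$ draws $\mathbf{z}\sim\mathbb{P}$ and sends task $j$ to machine 1 iff $T_{1j}/T_{2j}<z_j$ (else to machine 2). $M(\mathbb{P},T)$ is the expected makespan of this allocation, $R_n(\mathbb{P},T)=M(\mathbb{P},T)/M^*(T)$, and $R_n(\mathbb{P})=\sup_{T\in\mathbb{R}_{++}^{2\times n}}R_n(\mathbb{P},T)\in[1,\infty]$. *)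

theory Defs
  imports "HOL-Probability.Probability"
begin

text \<open>Processing-time matrices and allocations are 2 x n real matrices
  (rows indexed by the numeral type 2, with rows 1 and 2; columns by a finite type 'n,
  so n = CARD('n) \<ge> 1).\<close>

definition pos_matrix :: "real^'n^2 \<Rightarrow> bool" where
  "pos_matrix T \<longleftrightarrow> (\<forall>i j. 0 < T$i$j)"

definition valid_alloc :: "real^'n^2 \<Rightarrow> bool" where
  "valid_alloc X \<longleftrightarrow> (\<forall>i j. X$i$j \<in> {0,1}) \<and> (\<forall>j. X$1$j + X$2$j = 1)"

definition makespan :: "real^'n^2 \<Rightarrow> real^'n^2 \<Rightarrow> real" where
  "makespan X T = Max (range (\<lambda>i::2. \<Sum>j\<in>UNIV. X$i$j * T$i$j))"

definition opt_makespan :: "real^'n^2 \<Rightarrow> real" where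
  "opt_makespan T = Min {makespan X T | X. valid_alloc X}"

definition alg_alloc :: "real^'n \<Rightarrow> real^'n^2 \<Rightarrow> real^'n^2" where
  "alg_alloc z T = (\<chi> i j. if (T$1$j / T$2$j < z$j) = (i = 1) then 1 else 0)"

definition exp_makespan :: "(real^'n) measure \<Rightarrow> real^'n^2 \<Rightarrow> real" where
  "exp_makespan P T = (\<integral>z. makespan (alg_alloc z T) T \<partial>P)"

definition ratio_T :: "(real^'n) measure \<Rightarrow> real^'n^2 \<Rightarrow> real" where
  "ratio_T P T = exp_makespan P T / opt_makespan T"

definition ratio :: "(real^'n) measure \<Rightarrow> ereal" where
  "ratio P = (SUP T\<in>{T. pos_matrix T}. ereal (ratio_T P T))"

definition admissible_measure :: "(real^'n) measure \<Rightarrow> bool" where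
  "admissible_measure P \<longleftrightarrow> prob_space P \<and> sets P = sets borel \<and>
     (AE z in P. \<forall>j. 0 < z$j)"

end

theory Submission
  imports Defs
begin

text \<open>Given \<open>T\<close> with ratios \<open>r\<^sub>j = T\<^sub>1\<^sub>j / T\<^sub>2\<^sub>j\<close>, raise the first row so that the
  ratios become values \<open>x\<^sub>j \<in> (r\<^sub>j, r\<^sub>j(1 + \<delta>))\<close> that are not atoms of the marginals of \<open>P\<close>;
  such values exist because a finite measure on the line has only countably many atoms.
  The new matrix \<open>T'\<close> satisfies \<open>T \<le> T' \<le> (1 + \<delta>) T\<close>, so its optimum grows by at most the factor
  \<open>1 + \<delta>\<close>, and the algorithm treats \<open>T\<close> and \<open>T'\<close> identically unless some \<open>z\<^sub>j\<close> lies in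
  \<open>(r\<^sub>j, r\<^sub>j(1 + \<delta>)]\<close>. By right continuity of the marginal distribution functions this event
  has probability \<open>o(1)\<close> as \<open>\<delta> \<rightarrow> 0\<close>, and on it the makespan is at most the total processing
  time. Hence \<open>R(P, T') \<ge> R(P, T) - o(1)\<close>.\<close>

lemma makespan_eq_max:
  "makespan X T = max (\<Sum>j\<in>UNIV. X$1$j * T$1$j) (\<Sum>j\<in>UNIV. X$2$j * T$2$j)"
  unfolding makespan_def by (simp add: UNIV_2 image_insert max.commute)

lemma alg_alloc_row1: "alg_alloc z T $ 1 $ j = (if T$1$j / T$2$j < z$j then 1 else 0)"
  and alg_alloc_row2: "alg_alloc z T $ 2 $ j = (if T$1$j / T$2$j < z$j then 0 else 1)"
  by (simp_all add: alg_alloc_def)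

lemma valid_alloc_alg_alloc: "valid_alloc (alg_alloc z T)"
  unfolding valid_alloc_def by (auto simp: forall_2 alg_alloc_row1 alg_alloc_row2)

lemma valid_alloc_nonneg: "valid_alloc X \<Longrightarrow> 0 \<le> X$i$j"
  unfolding valid_alloc_def by (metis empty_iff insert_iff order_refl zero_le_one)

lemma valid_alloc_eq_indicator_row1:
  assumes "valid_alloc X"
  shows "X = (\<chi> i j. if (X$1$j = 1) = (i = 1) then 1 else 0)"
proof (intro vec_eq_iff[THEN iffD2] allI)
  fix i :: 2 and j
  have X1: "X$1$j = 0 \<or> X$1$j = 1" and X2: "X$2$j = 1 - X$1$j"
    using assms unfolding valid_alloc_def by (auto simp: eq_diff_eq add.commute)
  consider "i = 1" | "i = 2" using exhaust_2 by blast
  then show "X$i$j = (\<chi> i j. if (X$1$j = 1) = (i = 1) then 1 else 0) $ i $ j"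
    using X1 by cases (auto simp: X2)
qed

lemma finite_valid_alloc: "finite {X :: real^'n^2. valid_alloc X}"
proof (rule finite_subset)
  show "{X. valid_alloc X} \<subseteq>
      range (\<lambda>b :: 'n \<Rightarrow> bool. (\<chi> i j. if b j = (i = 1) then 1 else 0) :: real^'n^2)"
  proof
    fix X :: "real^'n^2"
    assume "X \<in> {X. valid_alloc X}"
    then show "X \<in> range (\<lambda>b. \<chi> i j. if b j = (i = 1) then 1 else 0)"
      using valid_alloc_eq_indicator_row1 by (intro image_eqI[of _ _ "\<lambda>j. X$1$j = 1"]) auto
  qed
qed simp

lemma makespan_le_scaled:
  assumes "valid_alloc X" and "\<And>i j. T'$i$j \<le> a * T$i$j" and "0 \<le> a"
  shows "makespan X T' \<le> a * makespan X T"
proof -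
  have "(\<Sum>j\<in>UNIV. X$i$j * T'$i$j) \<le> a * (\<Sum>j\<in>UNIV. X$i$j * T$i$j)" for i
    unfolding sum_distrib_left
  proof (rule sum_mono)
    fix j
    have "X$i$j * T'$i$j \<le> X$i$j * (a * T$i$j)"
      using assms(2) valid_alloc_nonneg[OF assms(1)] by (rule mult_left_mono)
    then show "X$i$j * T'$i$j \<le> a * (X$i$j * T$i$j)" by (simp add: algebra_simps)
  qed
  moreover have "a * (\<Sum>j\<in>UNIV. X$1$j * T$1$j) \<le> a * makespan X T"
    and "a * (\<Sum>j\<in>UNIV. X$2$j * T$2$j) \<le> a * makespan X T"
    unfolding makespan_eq_max using \<open>0 \<le> a\<close> by (simp_all add: mult_left_mono)
  ultimately show ?thesis
    unfolding makespan_eq_max[of X T'] by (meson max.boundedI order_trans)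
qed

lemma makespan_mono:
  "valid_alloc X \<Longrightarrow> (\<And>i j. T$i$j \<le> T'$i$j) \<Longrightarrow> makespan X T \<le> makespan X T'"
  using makespan_le_scaled[of X T 1 T'] by simp

lemma opt_makespan_le: "valid_alloc X \<Longrightarrow> opt_makespan T \<le> makespan X T"
  unfolding opt_makespan_def
  by (rule Min_le) (auto simp: setcompr_eq_image intro: finite_imageI finite_valid_alloc)

lemma opt_makespan_attained:
  obtains X where "valid_alloc X" and "opt_makespan T = makespan X T"
proof -
  have "opt_makespan T \<in> {makespan X T | X. valid_alloc X}"
    unfolding opt_makespan_def using valid_alloc_alg_alloc
    by (intro Min_in) (auto simp: setcompr_eq_image intro: finite_imageI finite_valid_alloc)
  then show ?thesis using that by blast
qed

lemma opt_makespan_le_scaled: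
  assumes "\<And>i j. T'$i$j \<le> a * T$i$j" and "0 \<le> a"
  shows "opt_makespan T' \<le> a * opt_makespan T"
proof -
  obtain X where X: "valid_alloc X" "opt_makespan T = makespan X T"
    by (rule opt_makespan_attained)
  have "opt_makespan T' \<le> makespan X T'" by (rule opt_makespan_le[OF X(1)])
  also have "\<dots> \<le> a * opt_makespan T" unfolding X(2) by (rule makespan_le_scaled[OF X(1) assms])
  finally show ?thesis .
qed

definition total_time :: "real^'n^2 \<Rightarrow> real" where
  "total_time T = (\<Sum>j\<in>UNIV. T$1$j + T$2$j)"

lemma makespan_bounds:
  assumes "valid_alloc X" and "pos_matrix T"
  shows makespan_pos: "0 < makespan X T"
    and makespan_le_total_time: "makespan X T \<le> total_time T"
proof -
  have X: "X$i$j \<in> {0,1}" "X$1$j + X$2$j = 1" for i j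
    using assms(1) by (auto simp: valid_alloc_def)
  have T: "0 < T$i$j" for i j using assms(2) by (auto simp: pos_matrix_def)
  have "0 < X$1$j * T$1$j + X$2$j * T$2$j" for j
    using X(1)[of 1 j] X(2)[of j] T[of 1 j] T[of 2 j] by auto
  then have "0 < (\<Sum>j\<in>UNIV. X$1$j * T$1$j + X$2$j * T$2$j)"
    by (simp add: sum_pos)
  moreover have "X$i$j * T$i$j \<le> T$1$j + T$2$j" for i j
    using X(1)[of i j] T[of 1 j] T[of 2 j] T[of i j] exhaust_2[of i] by auto
  then have "(\<Sum>j\<in>UNIV. X$i$j * T$i$j) \<le> total_time T" for i
    unfolding total_time_def by (rule sum_mono)
  ultimately show "0 < makespan X T" "makespan X T \<le> total_time T"
    unfolding makespan_eq_max sum.distrib by (auto simp: max_def)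
qed

lemma opt_makespan_pos: "pos_matrix T \<Longrightarrow> 0 < opt_makespan T"
  by (metis opt_makespan_attained makespan_pos)

lemma total_time_nonneg: "pos_matrix T \<Longrightarrow> 0 \<le> total_time T"
  unfolding total_time_def pos_matrix_def by (simp add: sum_nonneg add_nonneg_nonneg less_imp_le)

lemma measurable_sets_borel:
  fixes f :: "'a::topological_space \<Rightarrow> 'b::topological_space"
  assumes "sets P = sets borel" and "f \<in> borel_measurable borel"
  shows "f \<in> borel_measurable P"
proof -
  have "measurable P (borel :: 'b measure) = measurable borel borel"
    by (rule measurable_cong_sets) (simp_all add: assms(1))
  with assms(2) show ?thesis by simp
qed

lemma borel_measurable_makespan_alg_alloc:
  "(\<lambda>z. makespan (alg_alloc z T) T) \<in> borel_measurable (borel :: (real^'n) measure)"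
  unfolding makespan_eq_max alg_alloc_row1 alg_alloc_row2 by measurable

lemma integrable_makespan_alg_alloc:
  assumes "finite_measure P" and "sets P = sets borel" and "pos_matrix T"
  shows "integrable P (\<lambda>z. makespan (alg_alloc z T) T)"
proof -
  interpret finite_measure P by fact
  show ?thesis
  proof (rule integrable_const_bound[where B = "total_time T"])
    show "AE z in P. norm (makespan (alg_alloc z T) T) \<le> total_time T"
      using makespan_pos[OF valid_alloc_alg_alloc assms(3)]
        makespan_le_total_time[OF valid_alloc_alg_alloc assms(3)]
      by (intro AE_I2) (simp add: abs_of_pos)
    show "(\<lambda>z. makespan (alg_alloc z T) T) \<in> borel_measurable P"
      using assms(2) borel_measurable_makespan_alg_alloc by (rule measurable_sets_borel)
  qed
qed

lemma exp_makespan_nonneg: "pos_matrix T \<Longrightarrow> 0 \<le> exp_makespan P T"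
  unfolding exp_makespan_def
  by (intro integral_nonneg_AE AE_I2 less_imp_le makespan_pos valid_alloc_alg_alloc)

lemma exp_makespan_le_perturbed:
  assumes "finite_measure P" and "sets P = sets borel"
    and "pos_matrix T" and "pos_matrix T'" and "\<And>i j. T$i$j \<le> T'$i$j"
    and "D \<in> sets P" and "\<And>z. z \<notin> D \<Longrightarrow> alg_alloc z T = alg_alloc z T'"
  shows "exp_makespan P T \<le> exp_makespan P T' + total_time T * measure P D"
proof -
  interpret finite_measure P by fact
  have pointwise: "makespan (alg_alloc z T) T
      \<le> makespan (alg_alloc z T') T' + total_time T * indicator D z" for z
  proof (cases "z \<in> D")
    case True
    then show ?thesis
      using makespan_le_total_time[OF valid_alloc_alg_alloc[of z T] assms(3)]
        makespan_pos[OF valid_alloc_alg_alloc[of z T'] assms(4)]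
      by (simp add: indicator_def)
  next
    case False
    then show ?thesis
      using makespan_mono[OF valid_alloc_alg_alloc assms(5)] assms(7) by simp
  qed
  have int_indicator: "integrable P (indicator D :: _ \<Rightarrow> real)"
    using assms(6) by (simp add: emeasure_eq_measure)
  have "exp_makespan P T
      \<le> (\<integral>z. makespan (alg_alloc z T') T' + total_time T * indicator D z \<partial>P)"
    unfolding exp_makespan_def using pointwise
    by (intro integral_mono integrable_makespan_alg_alloc assms(1-3)
        Bochner_Integration.integrable_add[OF integrable_makespan_alg_alloc[OF assms(1,2,4)]
          integrable_mult_right[OF int_indicator]])
  also have "\<dots> = exp_makespan P T' + total_time T * measure P D"
    unfolding exp_makespan_def using int_indicator assms(6)
    by (simp add: integrable_makespan_alg_alloc assms(1-4))
  finally show ?thesis .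
qed

lemma (in finite_borel_measure) exists_nonatom_between:
  assumes "a < b"
  shows "\<exists>x\<in>{a<..<b}. measure M {x} = 0"
proof -
  obtain x where "x \<in> {a<..<b}" and "\<not> measure M {x} > 0"
    using open_minus_countable[OF countable_atoms, of "{a<..<b}"] assms by auto
  then show ?thesis using measure_nonneg[of M "{x}"] by (intro bexI[of _ x]) auto
qed

lemma (in finite_borel_measure) measure_Ioc_tendsto_0:
  "((\<lambda>s. measure M {a<..s}) \<longlongrightarrow> 0) (at_right a)"
proof -
  have "((\<lambda>s. cdf M s - cdf M a) \<longlongrightarrow> cdf M a - cdf M a) (at_right a)"
    using cdf_is_right_cont[of a] by (intro tendsto_intros) (simp add: continuous_within)
  moreover have "\<forall>\<^sub>F s in at_right a. cdf M s - cdf M a = measure M {a<..s}"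
    using eventually_at_right_less[of a] by eventually_elim (rule cdf_diff_eq)
  ultimately show ?thesis by (simp add: tendsto_cong)
qed

lemma finite_borel_measure_coordinate:
  fixes P :: "(real^'n) measure"
  assumes "finite_measure P" and "sets P = sets borel"
  shows "finite_borel_measure (distr P borel (\<lambda>z. z$j))"
proof -
  have "(\<lambda>z. z$j) \<in> borel_measurable P"
    using assms(2) by (rule measurable_sets_borel) simp
  then show ?thesis
    unfolding finite_borel_measure_def finite_borel_measure_axioms_def
    using finite_measure.finite_measure_distr[OF assms(1)] by simp
qed

lemma measure_coordinate_preimage:
  fixes P :: "(real^'n) measure"
  assumes "sets P = sets borel" and "A \<in> sets borel"
  shows "measure P {z \<in> space P. z$j \<in> A} = measure (distr P borel (\<lambda>z. z$j)) A"
proof -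
  have "(\<lambda>z. z$j) \<in> borel_measurable P"
    using assms(1) by (rule measurable_sets_borel) simp
  then show ?thesis using assms(2) by (simp add: measure_distr vimage_def Int_def conj_commute)
qed

lemma exists_nonatomic_coordinate_between:
  fixes P :: "(real^'n) measure"
  assumes "finite_measure P" and "sets P = sets borel" and "a < b"
  shows "\<exists>x\<in>{a<..<b}. measure P {z \<in> space P. z$j = x} = 0"
  using finite_borel_measure.exists_nonatom_between[OF finite_borel_measure_coordinate[OF assms(1,2)]]
    measure_coordinate_preimage[OF assms(2), of "{_}" j] \<open>a < b\<close> by simp

lemma measure_coordinate_strip_tendsto_0:
  fixes P :: "(real^'n) measure"
  assumes "finite_measure P" and "sets P = sets borel"
  shows "((\<lambda>s. measure P {z \<in> space P. a < z$j \<and> z$j \<le> s}) \<longlongrightarrow> 0) (at_right a)"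
  using finite_borel_measure.measure_Ioc_tendsto_0[OF finite_borel_measure_coordinate[OF assms]]
    measure_coordinate_preimage[OF assms(2), of "{a<.._}" j] by simp

definition matrix_with_ratios :: "('n \<Rightarrow> real) \<Rightarrow> real^'n^2 \<Rightarrow> real^'n^2" where
  "matrix_with_ratios x T = (\<chi> i j. if i = 1 then x j * T$2$j else T$i$j)"

lemma matrix_with_ratios_ratio:
  "pos_matrix T \<Longrightarrow> matrix_with_ratios x T $1$j / matrix_with_ratios x T $2$j = x j"
  unfolding matrix_with_ratios_def pos_matrix_def by (simp add: less_imp_neq[symmetric])

lemma pos_matrix_with_ratios:
  "pos_matrix T \<Longrightarrow> (\<And>j. 0 < x j) \<Longrightarrow> pos_matrix (matrix_with_ratios x T)"
  unfolding matrix_with_ratios_def pos_matrix_def by (simp add: forall_2)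

lemma matrix_with_ratios_bounds:
  assumes "pos_matrix T" and "0 \<le> \<delta>"
    and "\<And>j. T$1$j / T$2$j \<le> x j" and "\<And>j. x j \<le> T$1$j / T$2$j * (1 + \<delta>)"
  shows "T$i$j \<le> matrix_with_ratios x T $i$j"
    and "matrix_with_ratios x T $i$j \<le> (1 + \<delta>) * T$i$j"
proof -
  have T2: "0 < T$2$j" using \<open>pos_matrix T\<close> by (simp add: pos_matrix_def)
  then have "T$1$j \<le> x j * T$2$j" and "x j * T$2$j \<le> (1 + \<delta>) * T$1$j"
    using assms(3,4)[of j] by (simp_all add: field_simps)
  then show "T$i$j \<le> matrix_with_ratios x T $i$j"
    and "matrix_with_ratios x T $i$j \<le> (1 + \<delta>) * T$i$j"
    using T2 \<open>0 \<le> \<delta>\<close> exhaust_2[of i] by (auto simp: matrix_with_ratios_def)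
qed

lemma alg_alloc_matrix_with_ratios:
  assumes "pos_matrix T" and "\<And>j. (T$1$j / T$2$j < z$j) = (x j < z$j)"
  shows "alg_alloc z (matrix_with_ratios x T) = alg_alloc z T"
  unfolding alg_alloc_def matrix_with_ratios_ratio[OF assms(1)] assms(2) ..

lemma ratio_T_matrix_with_ratios_lower_bound:
  fixes P :: "(real^'n) measure" and T :: "real^'n^2"
  defines "r j \<equiv> T$1$j / T$2$j"
  assumes "finite_measure P" and "sets P = sets borel" and "pos_matrix T" and "0 \<le> \<delta>"
    and x_gt: "\<And>j. r j < x j" and x_le: "\<And>j. x j \<le> r j * (1 + \<delta>)"
  shows "(exp_makespan P T - total_time T *
            (\<Sum>j\<in>UNIV. measure P {z \<in> space P. r j < z$j \<and> z$j \<le> r j * (1 + \<delta>)}))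
         / ((1 + \<delta>) * opt_makespan T)
       \<le> ratio_T P (matrix_with_ratios x T)"
proof -
  define T' where "T' = matrix_with_ratios x T"
  define strip where "strip j = {z \<in> space P. r j < z$j \<and> z$j \<le> r j * (1 + \<delta>)}" for j
  have space: "space P = UNIV"
    using sets_eq_imp_space_eq[OF \<open>sets P = sets borel\<close>] by simp
  have "0 < x j" for j
    using \<open>pos_matrix T\<close> x_gt[of j] unfolding r_def pos_matrix_def by (meson divide_pos_pos less_trans)
  then have T'_pos: "pos_matrix T'"
    unfolding T'_def by (intro pos_matrix_with_ratios \<open>pos_matrix T\<close>)
  note T'_bounds = matrix_with_ratios_bounds[OF \<open>pos_matrix T\<close> \<open>0 \<le> \<delta>\<close>
      less_imp_le[OF x_gt[unfolded r_def]] x_le[unfolded r_def], folded T'_def]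
  have strip_sets: "strip j \<in> sets P" for j
    unfolding strip_def space \<open>sets P = sets borel\<close> by measurable
  have same_alloc: "alg_alloc z T = alg_alloc z T'" if "z \<notin> (\<Union>j. strip j)" for z
  proof -
    have "(r j < z$j) = (x j < z$j)" for j
      using that x_gt[of j] x_le[of j] unfolding strip_def space by fastforce
    then show ?thesis
      unfolding T'_def r_def by (intro alg_alloc_matrix_with_ratios[symmetric] \<open>pos_matrix T\<close>)
  qed
  have "exp_makespan P T \<le> exp_makespan P T' + total_time T * measure P (\<Union>j. strip j)"
    using strip_sets same_alloc T'_bounds(1)
    by (intro exp_makespan_le_perturbed[OF assms(2-4) T'_pos]) auto
  also have "\<dots> \<le> exp_makespan P T' + total_time T * (\<Sum>j\<in>UNIV. measure P (strip j))"
    using measure_UNION_le[of UNIV strip P] strip_sets total_time_nonneg[OF \<open>pos_matrix T\<close>]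
    by (simp add: mult_left_mono)
  finally have exp_le: "exp_makespan P T - total_time T * (\<Sum>j\<in>UNIV. measure P (strip j))
      \<le> exp_makespan P T'" by simp
  have opt_le: "opt_makespan T' \<le> (1 + \<delta>) * opt_makespan T"
    using T'_bounds(2) \<open>0 \<le> \<delta>\<close> by (intro opt_makespan_le_scaled) auto
  show ?thesis
    unfolding ratio_T_def T'_def[symmetric] strip_def[symmetric]
    using exp_le opt_le opt_makespan_pos[OF T'_pos] exp_makespan_nonneg[OF T'_pos]
    by (intro frac_le) simp_all
qed

lemma measure_coordinate_scaled_strip_tendsto_0:
  fixes P :: "(real^'n) measure"
  assumes "finite_measure P" and "sets P = sets borel" and "0 < r"
  shows "((\<lambda>\<delta>. measure P {z \<in> space P. r < z$j \<and> z$j \<le> r * (1 + \<delta>)}) \<longlongrightarrow> 0) (at_right 0)"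
proof -
  have "filterlim (\<lambda>\<delta>. r * (1 + \<delta>)) (at_right r) (at_right 0)"
  proof (rule tendsto_imp_filterlim_at_right)
    have "((\<lambda>\<delta>. r * (1 + \<delta>)) \<longlongrightarrow> r * (1 + 0)) (at_right 0)"
      by (intro tendsto_intros)
    then show "((\<lambda>\<delta>. r * (1 + \<delta>)) \<longlongrightarrow> r) (at_right 0)" by simp
    show "\<forall>\<^sub>F \<delta> in at_right 0. r < r * (1 + \<delta>)"
      using eventually_at_right_less[of "0::real"] by (rule eventually_mono) (simp add: \<open>0 < r\<close>)
  qed
  with measure_coordinate_strip_tendsto_0[OF assms(1,2)] show ?thesis
    by (rule filterlim_compose)
qed

lemma exists_nonatomic_coordinates_between:
  fixes P :: "(real^'n) measure"
  assumes "finite_measure P" and "sets P = sets borel" and "\<And>j. a j < b j"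
  shows "\<exists>x. \<forall>j. a j < x j \<and> x j < b j \<and> measure P {z \<in> space P. z$j = x j} = 0"
proof -
  have "\<forall>j. \<exists>y. a j < y \<and> y < b j \<and> measure P {z \<in> space P. z$j = y} = 0"
    using exists_nonatomic_coordinate_between[OF assms(1,2,3)] by (simp add: Bex_def)
  then show ?thesis by (rule choice)
qed

lemma exists_nonatomic_matrix_above:
  fixes P :: "(real^'n) measure"
  assumes "admissible_measure P" and "pos_matrix T" and "c < ratio_T P T"
  shows "\<exists>T'. pos_matrix T' \<and> (\<forall>j. measure P {z \<in> space P. z$j = T'$1$j / T'$2$j} = 0)
    \<and> c < ratio_T P T'"
proof -
  have fin: "finite_measure P" and sets: "sets P = sets borel"
    using assms(1) by (simp_all add: admissible_measure_def prob_space.finite_measure)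
  define r where "r j = T$1$j / T$2$j" for j
  have r_pos: "0 < r j" for j
    using \<open>pos_matrix T\<close> unfolding r_def pos_matrix_def by simp
  define g where "g \<delta> = (exp_makespan P T - total_time T *
      (\<Sum>j\<in>UNIV. measure P {z \<in> space P. r j < z$j \<and> z$j \<le> r j * (1 + \<delta>)}))
      / ((1 + \<delta>) * opt_makespan T)" for \<delta>
  have "(g \<longlongrightarrow> (exp_makespan P T - total_time T * 0) / ((1 + 0) * opt_makespan T))
      (at_right 0)"
    unfolding g_def using opt_makespan_pos[OF \<open>pos_matrix T\<close>]
      measure_coordinate_scaled_strip_tendsto_0[OF fin sets r_pos]
    by (intro tendsto_divide tendsto_diff tendsto_mult tendsto_add tendsto_const tendsto_ident_at
        tendsto_null_sum) simp_all
  then have "(g \<longlongrightarrow> ratio_T P T) (at_right 0)" by (simp add: ratio_T_def)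
  from order_tendstoD(1)[OF this \<open>c < ratio_T P T\<close>] eventually_at_right_less[of "0::real"]
  have "\<forall>\<^sub>F \<delta> in at_right 0. c < g \<delta> \<and> 0 < \<delta>" by (rule eventually_conj)
  then obtain \<delta> :: real where "c < g \<delta>" and "0 < \<delta>"
    using eventually_happens'[OF trivial_limit_at_right_real] by blast
  have lt: "r j < r j * (1 + \<delta>)" for j using r_pos[of j] \<open>0 < \<delta>\<close> by simp
  obtain x where "\<forall>j. r j < x j \<and> x j < r j * (1 + \<delta>)
      \<and> measure P {z \<in> space P. z$j = x j} = 0"
    using exists_nonatomic_coordinates_between[OF fin sets, where a = r, OF lt] by blast
  then have x_gt: "r j < x j" and x_lt: "x j < r j * (1 + \<delta>)"
    and x_nonatomic: "measure P {z \<in> space P. z$j = x j} = 0" for j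
    by simp_all
  have "g \<delta> \<le> ratio_T P (matrix_with_ratios x T)"
    using x_gt less_imp_le[OF x_lt] \<open>0 < \<delta>\<close> unfolding g_def r_def
    by (intro ratio_T_matrix_with_ratios_lower_bound[OF fin sets \<open>pos_matrix T\<close>]) simp_all
  moreover have "pos_matrix (matrix_with_ratios x T)"
    using less_trans[OF r_pos x_gt] by (intro pos_matrix_with_ratios \<open>pos_matrix T\<close>)
  ultimately show ?thesis
    using \<open>c < g \<delta>\<close> x_nonatomic matrix_with_ratios_ratio[OF \<open>pos_matrix T\<close>]
    by (intro exI[of _ "matrix_with_ratios x T"]) simp
qed

theorem theorem2:
  fixes P :: "(real^'n) measure"
  assumes "admissible_measure P"
  shows "ratio P =
    (SUP T\<in>{T. pos_matrix T \<and> (\<forall>j. measure P {z \<in> space P. z$j = T$1$j / T$2$j} = 0)}.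
       ereal (ratio_T P T))"
proof (rule antisym)
  let ?nonatomic = "{T. pos_matrix T \<and> (\<forall>j. measure P {z \<in> space P. z$j = T$1$j / T$2$j} = 0)}"
  show "ratio P \<le> (SUP T\<in>?nonatomic. ereal (ratio_T P T))"
    unfolding ratio_def
  proof (rule SUP_least)
    fix T :: "real^'n^2"
    assume "T \<in> {T. pos_matrix T}"
    show "ereal (ratio_T P T) \<le> (SUP T\<in>?nonatomic. ereal (ratio_T P T))"
    proof (rule le_SUP_iff[THEN iffD2], intro allI impI)
      fix y
      assume "y < ereal (ratio_T P T)"
      then obtain c where "y < ereal c" and "ereal c < ereal (ratio_T P T)"
        using ereal_dense2 by blast
      then obtain T' where "T' \<in> ?nonatomic" and "c < ratio_T P T'"
        using exists_nonatomic_matrix_above[OF assms, of T c] \<open>T \<in> {T. pos_matrix T}\<close> by auto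
      moreover have "y < ereal (ratio_T P T')"
        using \<open>y < ereal c\<close> \<open>c < ratio_T P T'\<close> by (simp add: less_trans)
      ultimately show "\<exists>T'\<in>?nonatomic. y < ereal (ratio_T P T')" by blast
    qed
  qed
  show "(SUP T\<in>?nonatomic. ereal (ratio_T P T)) \<le> ratio P"
    unfolding ratio_def by (rule SUP_subset_mono) auto
qed

end
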